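(* Let $n \in \mathbb{Z}_{\geq 0}$, $k \in \mathbb{Z}_{\geq 1}$, $m_1,\dots,m_k\in\mathbb{Z}_{\geq 2}$, and let \[ G = \langle e_1, \ldots, e_k, h_1, \ldots, h_{2n} \mid e_1^{m_1} = \cdots = e_k^{m_k} = 1 \rangle , \] and assume that $G$ is neither cyclic nor isomorphic to $\mathbb{Z}_2\ast\mathbb{Z}_2$. Let $F$ be the subgroup of $G$ generated by $S_1\cup S_2$ (defined below). Then $F$ is a free group and $[G:F]=m_1\cdots m_k$.
   Context: Notation: $[l]=\{1,\dots,l\}$ for $l\in\mathbb{Z}_{>0}$; $[g,h]=ghg^{-1}h^{-1}$ and ${}^{g}h = ghg^{-1}$. For $2\le t\le k$ set $\Lambda_t = \big(([m_1]\times\cdots\times[m_{t-1}])\setminus\{(m_1,\dots,m_{t-1})\}\big)\times[m_t-1]$ and $\Xi_t=[m_{t+1}]\times\cdots\times[m_k]$, where $\Xi_k=\{0\}$. For $\lambda=(u_1,\dots,u_t)\in\Lambda_t$ and $\xi=(u_{t+1},\dots,u_k)\in\Xi_t$ put $f_\lambda=[e_t^{u_t}, e_{t-1}^{u_{t-1}}\cdots e_1^{u_1}]$ and $g_\xi = e_k^{u_k}\cdots e_{t+1}^{u_{t+1}}$ (with $g_\xi=1$ for $\xi\in\Xi_k$). Set $S_1=\{{}^{g_\xi}f_\lambda \mid 2\le t\le k,\ \lambda\in\Lambda_t,\ \xi\in\Xi_t\}$ and $S_2=\{{}^{e_k^{i_k}\cdots e_1^{i_1}}h_l \mid l\in[2n],\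 (i_1,\dots,i_k)\in[m_1]\times\cdots\times[m_k]\}$. *)

theory Defs
  imports "HOL-Algebra.Coset" "HOL-Algebra.Elementary_Groups"
begin

text \<open>A letter is a pair (x, b): b = False means x, b = True means x inverse.\<close>

definition inv_letter :: "'g \<times> bool \<Rightarrow> 'g \<times> bool" where
  "inv_letter a = (fst a, \<not> snd a)"

fun cons_red :: "'g \<times> bool \<Rightarrow> ('g \<times> bool) list \<Rightarrow> ('g \<times> bool) list" where
  "cons_red a [] = [a]"
| "cons_red a (b # w) = (if b = inv_letter a then w else a # b # w)"

definition reduce :: "('g \<times> bool) list \<Rightarrow> ('g \<times> bool) list" where
  "reduce w = foldr cons_red w []"

definition reduced :: "('g \<times> bool) list \<Rightarrow> bool" where
  "reduced w \<longleftrightarrow> (\<forall>i. Suc i < length w \<longrightarrow> w ! Suc i \<noteq> inv_letter (w ! i))"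

definition word_inv :: "('g \<times> bool) list \<Rightarrow> ('g \<times> bool) list" where
  "word_inv w = rev (map inv_letter w)"

definition free_grp :: "'g set \<Rightarrow> ('g \<times> bool) list monoid" where
  "free_grp A = \<lparr>carrier = {w. set (map fst w) \<subseteq> A \<and> reduced w},
                 mult = (\<lambda>u v. reduce (u @ v)), one = []\<rparr>"

definition is_free_grp :: "('a, 'b) monoid_scheme \<Rightarrow> bool" where
  "is_free_grp Hg \<longleftrightarrow> (\<exists>B :: 'a set. Hg \<cong> free_grp B)"

text \<open>Generators: Inl i is e_i (1 \<le> i \<le> k), Inr l is h_l (1 \<le> l \<le> 2n).\<close>
definition gens :: "nat \<Rightarrow> nat \<Rightarrow> (nat + nat) set" where
  "gens k n = Inl ` {1..k} \<union> Inr ` {1..2*n}"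

definition relators :: "nat \<Rightarrow> (nat \<Rightarrow> nat) \<Rightarrow> ((nat + nat) \<times> bool) list set" where
  "relators k m = {replicate (m i) (Inl i, False) | i. i \<in> {1..k}}"

definition rel_closure :: "nat \<Rightarrow> nat \<Rightarrow> (nat \<Rightarrow> nat) \<Rightarrow> ((nat + nat) \<times> bool) list set" where
  "rel_closure k n m = generate (free_grp (gens k n))
     {reduce (g @ r @ word_inv g) | g r. g \<in> carrier (free_grp (gens k n)) \<and> r \<in> relators k m}"

definition pres_grp :: "nat \<Rightarrow> nat \<Rightarrow> (nat \<Rightarrow> nat) \<Rightarrow> ((nat + nat) \<times> bool) list set monoid" where
  "pres_grp k n m = free_grp (gens k n) Mod rel_closure k n m"

definition gen_e :: "nat \<Rightarrow> nat \<Rightarrow> (nat \<Rightarrow> nat) \<Rightarrow> nat \<Rightarrow> ((nat + nat) \<times> bool) list set" where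
  "gen_e k n m i = rel_closure k n m #>\<^bsub>free_grp (gens k n)\<^esub> [(Inl i, False)]"

definition gen_h :: "nat \<Rightarrow> nat \<Rightarrow> (nat \<Rightarrow> nat) \<Rightarrow> nat \<Rightarrow> ((nat + nat) \<times> bool) list set" where
  "gen_h k n m l = rel_closure k n m #>\<^bsub>free_grp (gens k n)\<^esub> [(Inr l, False)]"

definition comm :: "('a, 'b) monoid_scheme \<Rightarrow> 'a \<Rightarrow> 'a \<Rightarrow> 'a" where
  "comm G g h = g \<otimes>\<^bsub>G\<^esub> h \<otimes>\<^bsub>G\<^esub> inv\<^bsub>G\<^esub> g \<otimes>\<^bsub>G\<^esub> inv\<^bsub>G\<^esub> h"

definition conj :: "('a, 'b) monoid_scheme \<Rightarrow> 'a \<Rightarrow> 'a \<Rightarrow> 'a" where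
  "conj G g h = g \<otimes>\<^bsub>G\<^esub> h \<otimes>\<^bsub>G\<^esub> inv\<^bsub>G\<^esub> g"

text \<open>dprod G f lo hi = f hi * f (hi-1) * ... * f lo (empty product = 1 if hi < lo).\<close>
definition dprod :: "('a, 'b) monoid_scheme \<Rightarrow> (nat \<Rightarrow> 'a) \<Rightarrow> nat \<Rightarrow> nat \<Rightarrow> 'a" where
  "dprod G f lo hi = foldr (\<lambda>i acc. f i \<otimes>\<^bsub>G\<^esub> acc) (rev [lo..<Suc hi]) \<one>\<^bsub>G\<^esub>"

text \<open>u encodes (u_1,...,u_k): lambda = (u_1..u_t), xi = (u_{t+1}..u_k).\<close>
definition S1 :: "nat \<Rightarrow> nat \<Rightarrow> (nat \<Rightarrow> nat) \<Rightarrow> ((nat + nat) \<times> bool) list set set" where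
  "S1 k n m = (let G = pres_grp k n m; e = gen_e k n m in
     {conj G (dprod G (\<lambda>i. e i [^]\<^bsub>G\<^esub> u i) (Suc t) k)
             (comm G (e t [^]\<^bsub>G\<^esub> u t) (dprod G (\<lambda>i. e i [^]\<^bsub>G\<^esub> u i) 1 (t - 1)))
      | t u. 2 \<le> t \<and> t \<le> k
        \<and> (\<forall>i\<in>{1..<t}. u i \<in> {1..m i}) \<and> (\<exists>i\<in>{1..<t}. u i \<noteq> m i)
        \<and> u t \<in> {1..m t - 1}
        \<and> (\<forall>i\<in>{t<..k}. u i \<in> {1..m i})})"

definition S2 :: "nat \<Rightarrow> nat \<Rightarrow> (nat \<Rightarrow> nat) \<Rightarrow> ((nat + nat) \<times> bool) list set set" where
  "S2 k n m = (let G = pres_grp k n m; e = gen_e k n m in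
     {conj G (dprod G (\<lambda>j. e j [^]\<^bsub>G\<^esub> (u j :: nat)) 1 k) (gen_h k n m l)
      | l u. l \<in> {1..2*n} \<and> (\<forall>j\<in>{1..k}. u j \<in> {1..m j})})"

end

(* The proof is the Reidemeister-Schreier method. Record the exponents of
   e_k^(s k) ... e_1^(s 1) in a state s; these elements, for s running over the
   residues modulo (m_1, ..., m_k), form a right transversal of F. A word in the
   generators is rewritten letter by letter while the state follows its exponent
   sums: a letter h_l becomes t(s) h_l t(s)^-1, which lies in S_2, and a letter
   e_j becomes f(s) f(s')^-1, where f(s) is a conjugated commutator that is
   either trivial or in S_1. The rewriting respects free reduction and kills the
   relators, so it induces a homomorphism from F to the free group on S_1 u S_2
   sending each generator to the corresponding letter; evaluation of words is
   its inverse. The identity t(s) w = (rewrite of w) t(s + exponents of w) puts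
   every coset of F through some t(s), and the exponent sums modulo the m_i,
   which vanish on F, separate the t(s); hence the index is m_1 ... m_k. *)

theory Submission
  imports Defs "HOL-Library.Function_Algebras"
begin

section \<open>Free reduction\<close>

type_synonym 'g word = "('g \<times> bool) list"

definition word_over :: "'g set \<Rightarrow> 'g word \<Rightarrow> bool" where
  "word_over A w \<longleftrightarrow> fst ` set w \<subseteq> A"

lemma word_over_Nil [simp]: "word_over A []"
  and word_over_Cons [simp]: "word_over A (x # w) \<longleftrightarrow> fst x \<in> A \<and> word_over A w"
  and word_over_append [simp]: "word_over A (u @ v) \<longleftrightarrow> word_over A u \<and> word_over A v"
  by (auto simp: word_over_def)

lemma word_over_replicate [simp]: "word_over A (replicate c x) \<longleftrightarrow> c = 0 \<or> fst x \<in> A"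
  by (induction c) auto

lemma word_over_mono: "word_over A w \<Longrightarrow> A \<subseteq> B \<Longrightarrow> word_over B w"
  by (auto simp: word_over_def)

lemma inv_letter_inv_letter [simp]: "inv_letter (inv_letter a) = a"
  by (simp add: inv_letter_def)

lemma fst_inv_letter [simp]: "fst (inv_letter a) = fst a"
  by (simp add: inv_letter_def)

lemma reduce_Nil [simp]: "reduce [] = []"
  by (simp add: reduce_def)

lemma reduce_Cons: "reduce (a # w) = cons_red a (reduce w)"
  by (simp add: reduce_def)

lemma reduced_Nil [simp]: "reduced []"
  and reduced_singleton [simp]: "reduced [a]"
  by (simp_all add: reduced_def)

lemma reduced_Cons_Cons: "reduced (a # b # w) \<longleftrightarrow> b \<noteq> inv_letter a \<and> reduced (b # w)"
  unfolding reduced_def by (auto simp: less_Suc_eq_0_disj)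

lemma reduced_ConsD: "reduced (a # w) \<Longrightarrow> reduced w"
  by (cases w) (auto simp: reduced_Cons_Cons)

lemma reduced_cons_red: "reduced w \<Longrightarrow> reduced (cons_red a w)"
  by (cases w) (auto simp: reduced_Cons_Cons dest: reduced_ConsD)

lemma reduced_reduce [simp]: "reduced (reduce w)"
  by (induction w) (auto simp: reduce_Cons reduced_cons_red)

lemma cons_red_reduced: "reduced (a # w) \<Longrightarrow> cons_red a w = a # w"
  by (cases w) (auto simp: reduced_Cons_Cons)

lemma reduce_reduced: "reduced w \<Longrightarrow> reduce w = w"
proof (induction w)
  case (Cons a w)
  then show ?case
    using reduced_ConsD by (fastforce simp: reduce_Cons cons_red_reduced)
qed simp

lemma reduced_replicate: "reduced (replicate c (x, False))"
  by (induction c) (auto simp: reduced_def nth_Cons' inv_letter_def)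

lemma reduce_idem [simp]: "reduce (reduce w) = reduce w"
  by (simp add: reduce_reduced)

lemma cons_red_cancel: "reduced w \<Longrightarrow> cons_red a (cons_red (inv_letter a) w) = w"
  by (cases w rule: remdups_adj.cases) (auto simp: reduced_Cons_Cons)

lemma foldr_cons_red_reduce:
  assumes "reduced w"
  shows "foldr cons_red (reduce u) w = foldr cons_red u w"
proof (induction u)
  case (Cons a u)
  have reduced_foldr: "reduced (foldr cons_red v w)" for v
    by (induction v) (auto simp: assms reduced_cons_red)
  show ?case
  proof (cases "reduce u")
    case (Cons b v)
    then show ?thesis
      using Cons.IH cons_red_cancel[OF reduced_foldr[of v], of a]
      by (auto simp: reduce_Cons)
  qed (use Cons.IH in \<open>simp add: reduce_Cons\<close>)
qed simp

lemma reduce_append: "reduce (u @ v) = reduce (reduce u @ reduce v)"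
proof -
  have split: "reduce (x @ y) = foldr cons_red x (reduce y)" for x y :: "'g word"
    by (simp add: reduce_def)
  show ?thesis
    unfolding split reduce_idem by (simp add: foldr_cons_red_reduce)
qed

lemma reduce_append_reduce_left [simp]: "reduce (reduce u @ v) = reduce (u @ v)"
  and reduce_append_reduce_right [simp]: "reduce (u @ reduce v) = reduce (u @ v)"
  by (metis reduce_append reduce_idem)+

lemma reduce_append_reduce_middle [simp]: "reduce (u @ reduce v @ w) = reduce (u @ v @ w)"
  and reduce_append_append_reduce [simp]: "reduce (u @ v @ reduce w) = reduce (u @ v @ w)"
  by (metis reduce_append_reduce_left reduce_append_reduce_right append_assoc)+

lemma reduce_singleton [simp]: "reduce [a] = [a]"
  by (simp add: reduce_Cons)

lemma reduce_append_Cons_reduce [simp]: "reduce (u @ a # reduce w) = reduce (u @ a # w)"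
  using reduce_append_append_reduce[of u "[a]" w] by simp

lemma reduce_Nil_append: "reduce u = [] \<Longrightarrow> reduce (u @ v) = reduce v"
  by (metis append_Nil reduce_append_reduce_left)

lemma word_inv_Nil [simp]: "word_inv [] = []"
  and word_inv_Cons: "word_inv (a # w) = word_inv w @ [inv_letter a]"
  and word_inv_word_inv [simp]: "word_inv (word_inv w) = w"
  and word_inv_singleton [simp]: "word_inv [a] = [inv_letter a]"
  by (simp_all add: word_inv_def rev_map comp_def)

lemma word_over_word_inv [simp]: "word_over A (word_inv w) \<longleftrightarrow> word_over A w"
  by (simp add: word_over_def word_inv_def image_image)

lemma reduce_word_inv_append_self [simp]: "reduce (word_inv w @ w) = []"
proof (induction w)
  case (Cons a w)
  have "reduce (word_inv (a # w) @ a # w)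
      = foldr cons_red (word_inv w) (cons_red (inv_letter a) (cons_red a (reduce w)))"
    by (simp add: reduce_def word_inv_Cons)
  also have "\<dots> = foldr cons_red (word_inv w) (reduce w)"
    using cons_red_cancel[of "reduce w" "inv_letter a"] by simp
  also have "\<dots> = reduce (word_inv w @ w)"
    by (simp add: reduce_def)
  finally show ?case
    using Cons.IH by simp
qed simp

lemma reduce_append_word_inv_self [simp]: "reduce (w @ word_inv w) = []"
  using reduce_word_inv_append_self[of "word_inv w"] by simp

lemma reduce_cancel_middle: "reduce (u @ word_inv v @ v @ w) = reduce (u @ w)"
  by (metis append_assoc append_Nil reduce_append_reduce_left reduce_append_reduce_right
      reduce_word_inv_append_self)

lemma reduce_eq_word_inv: "reduce (u @ v) = [] \<Longrightarrow> reduce v = reduce (word_inv u)"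
  by (metis append_Nil append_Nil2 reduce_append_reduce_right reduce_cancel_middle)

lemma set_reduce: "set (reduce w) \<subseteq> set w"
proof (induction w)
  case (Cons a w)
  then show ?case
    by (cases "reduce w") (auto simp: reduce_Cons)
qed simp

lemma word_over_reduce: "word_over A w \<Longrightarrow> word_over A (reduce w)"
  using set_reduce by (fastforce simp: word_over_def)

lemma reduced_word_inv: "reduced w \<Longrightarrow> reduced (word_inv w)"
  unfolding reduced_def word_inv_def
proof (intro allI impI)
  fix i
  assume reduced: "\<forall>i. Suc i < length w \<longrightarrow> w ! Suc i \<noteq> inv_letter (w ! i)"
    and i: "Suc i < length (rev (map inv_letter w))"
  then have "length w - 1 - i = Suc (length w - 1 - Suc i)"
    by simp
  then show "rev (map inv_letter w) ! Suc i \<noteq> inv_letter (rev (map inv_letter w) ! i)"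
    using reduced[rule_format, of "length w - 1 - Suc i"] i
    by (auto simp: rev_nth inv_letter_def prod_eq_iff)
qed

lemma reduce_word_inv: "reduce (word_inv w) = word_inv (reduce w)"
  by (metis reduce_append_reduce_left reduce_eq_word_inv reduce_reduced reduced_reduce
      reduced_word_inv reduce_word_inv_append_self word_inv_word_inv)

lemma carrier_free_grp: "w \<in> carrier (free_grp A) \<longleftrightarrow> word_over A w \<and> reduced w"
  and mult_free_grp: "u \<otimes>\<^bsub>free_grp A\<^esub> v = reduce (u @ v)"
  and one_free_grp: "\<one>\<^bsub>free_grp A\<^esub> = []"
  by (simp_all add: free_grp_def word_over_def)

lemma free_grp_group: "group (free_grp A)"
proof (rule groupI)
  fix x y z
  assume x: "x \<in> carrier (free_grp A)"
  show "\<one>\<^bsub>free_grp A\<^esub> \<otimes>\<^bsub>free_grp A\<^esub> x = x"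
    using x by (simp add: carrier_free_grp mult_free_grp one_free_grp reduce_reduced)
  show "\<exists>y\<in>carrier (free_grp A). y \<otimes>\<^bsub>free_grp A\<^esub> x = \<one>\<^bsub>free_grp A\<^esub>"
    using x reduced_word_inv
    by (intro bexI[of _ "word_inv x"]) (auto simp: carrier_free_grp mult_free_grp one_free_grp)
  show "x \<otimes>\<^bsub>free_grp A\<^esub> y \<otimes>\<^bsub>free_grp A\<^esub> z = x \<otimes>\<^bsub>free_grp A\<^esub> (y \<otimes>\<^bsub>free_grp A\<^esub> z)"
    by (simp add: mult_free_grp)
  assume "y \<in> carrier (free_grp A)"
  then show "x \<otimes>\<^bsub>free_grp A\<^esub> y \<in> carrier (free_grp A)"
    using x by (simp add: carrier_free_grp mult_free_grp word_over_reduce)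
qed (simp add: carrier_free_grp one_free_grp)

lemma inv_free_grp:
  assumes "x \<in> carrier (free_grp A)"
  shows "inv\<^bsub>free_grp A\<^esub> x = word_inv x"
  using assms reduced_word_inv[of x]
  by (intro group.inv_equality[OF free_grp_group])
     (auto simp: carrier_free_grp mult_free_grp one_free_grp)

definition eval_word :: "('a, 'b) monoid_scheme \<Rightarrow> 'a word \<Rightarrow> 'a" where
  "eval_word G w = foldr (\<lambda>(x, b) y. (if b then inv\<^bsub>G\<^esub> x else x) \<otimes>\<^bsub>G\<^esub> y) w \<one>\<^bsub>G\<^esub>"

lemma eval_word_Nil [simp]: "eval_word G [] = \<one>\<^bsub>G\<^esub>"
  and eval_word_Cons: "eval_word G ((x, b) # w) = (if b then inv\<^bsub>G\<^esub> x else x) \<otimes>\<^bsub>G\<^esub> eval_word G w"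
  by (simp_all add: eval_word_def)

lemma dprod_empty: "hi < lo \<Longrightarrow> dprod G f lo hi = \<one>\<^bsub>G\<^esub>"
  by (simp add: dprod_def)

lemma dprod_Suc: "lo \<le> Suc hi \<Longrightarrow> dprod G f lo (Suc hi) = f (Suc hi) \<otimes>\<^bsub>G\<^esub> dprod G f lo hi"
  by (simp add: dprod_def)

context group
begin

lemma inv_mult_cancel_left [simp]: "x \<in> carrier G \<Longrightarrow> y \<in> carrier G \<Longrightarrow> inv x \<otimes> (x \<otimes> y) = y"
  and mult_inv_cancel_left [simp]: "x \<in> carrier G \<Longrightarrow> y \<in> carrier G \<Longrightarrow> x \<otimes> (inv x \<otimes> y) = y"
  by (simp_all add: m_assoc [symmetric])

lemma eval_word_closed [simp]: "word_over (carrier G) w \<Longrightarrow> eval_word G w \<in> carrier G"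
  by (induction w) (auto simp: eval_word_Cons)

lemma eval_word_append:
  "word_over (carrier G) u \<Longrightarrow> word_over (carrier G) v \<Longrightarrow>
    eval_word G (u @ v) = eval_word G u \<otimes> eval_word G v"
  by (induction u) (auto simp: eval_word_Cons m_assoc)

lemma eval_word_word_inv:
  "word_over (carrier G) w \<Longrightarrow> eval_word G (word_inv w) = inv (eval_word G w)"
  by (induction w)
     (auto simp: word_inv_Cons eval_word_append eval_word_Cons inv_letter_def inv_mult_group)

lemma eval_word_cons_red:
  assumes "fst a \<in> carrier G" "word_over (carrier G) w"
  shows "eval_word G (cons_red a w) = eval_word G (a # w)"
proof (cases w)
  case (Cons b v)
  with assms show ?thesis
    by (cases a) (auto simp: eval_word_Cons inv_letter_def)
qed simp

lemma eval_word_reduce: "word_over (carrier G) w \<Longrightarrow> eval_word G (reduce w) = eval_word G w"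
proof (induction w)
  case (Cons a w)
  then show ?case
    by (cases a) (simp add: reduce_Cons eval_word_cons_red eval_word_Cons word_over_reduce)
qed simp

lemma eval_word_in_generate:
  "A \<subseteq> carrier G \<Longrightarrow> word_over A w \<Longrightarrow> eval_word G w \<in> generate G A"
  by (induction w) (auto simp: eval_word_Cons intro!: generate.eng intro: generate.one generate.inv generate.incl)

lemma dprod_closed:
  "(\<And>i. i \<in> {lo..hi} \<Longrightarrow> f i \<in> carrier G) \<Longrightarrow> dprod G f lo hi \<in> carrier G"
  by (induction hi) (auto simp: dprod_def)

lemma dprod_cong:
  "(\<And>i. i \<in> {lo..hi} \<Longrightarrow> f i = g i) \<Longrightarrow> dprod G f lo hi = dprod G g lo hi"
  unfolding dprod_def by (rule foldr_cong) auto

lemma dprod_eq_one: "(\<And>i. i \<in> {lo..hi} \<Longrightarrow> f i = \<one>) \<Longrightarrow> dprod G f lo hi = \<one>"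
  by (induction hi) (auto simp: dprod_def)

lemma dprod_split:
  assumes "lo \<le> j" "j \<le> hi" "0 < j" "\<And>i. i \<in> {lo..hi} \<Longrightarrow> f i \<in> carrier G"
  shows "dprod G f lo hi = dprod G f (Suc j) hi \<otimes> f j \<otimes> dprod G f lo (j - 1)"
  using assms(2,4)
proof (induction hi rule: dec_induct)
  case base
  have "dprod G f lo j = f j \<otimes> dprod G f lo (j - 1)"
    using assms(1,3) dprod_Suc[of lo "j - 1" G f] by simp
  with base show ?case
    using assms(1) by (simp add: dprod_empty dprod_closed)
next
  case (step hi)
  have closed: "dprod G f (Suc j) hi \<in> carrier G" "dprod G f lo (j - 1) \<in> carrier G"
    using step.prems step.hyps assms(1) by (auto intro!: dprod_closed)
  have "dprod G f lo (Suc hi) = f (Suc hi) \<otimes> dprod G f lo hi"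
    using assms(1) step.hyps by (simp add: dprod_Suc)
  also have "\<dots> = dprod G f (Suc j) (Suc hi) \<otimes> f j \<otimes> dprod G f lo (j - 1)"
    using step closed assms(1) by (simp add: dprod_Suc m_assoc)
  finally show ?case .
qed

lemma mult_eq_conj_comm:
  assumes "P \<in> carrier G" "X \<in> carrier G" "Q \<in> carrier G"
  shows "P \<otimes> X \<otimes> Q = conj G P (comm G X Q) \<otimes> (P \<otimes> Q \<otimes> X)"
  using assms by (simp add: conj_def comm_def m_assoc)

text \<open>This is where the generators in \<open>S\<^sub>1\<close> come from: a letter \<open>Y\<close> moved past the
  transversal element \<open>P X Q\<close> is absorbed into \<open>X\<close> at the cost of a quotient of two
  conjugated commutators.\<close>

lemma mult_eq_conj_comm_shift:
  assumes P: "P \<in> carrier G" and X: "X \<in> carrier G" and Q: "Q \<in> carrier G"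
    and Y: "Y \<in> carrier G"
  shows "P \<otimes> X \<otimes> Q \<otimes> Y
    = conj G P (comm G X Q) \<otimes> inv (conj G P (comm G (X \<otimes> Y) Q)) \<otimes> (P \<otimes> (X \<otimes> Y) \<otimes> Q)"
proof -
  have closed: "conj G P (comm G Z Q) \<in> carrier G" if "Z \<in> carrier G" for Z
    using that P Q by (simp add: conj_def comm_def)
  have "P \<otimes> X \<otimes> Q \<otimes> Y = conj G P (comm G X Q) \<otimes> (P \<otimes> Q \<otimes> (X \<otimes> Y))"
    using mult_eq_conj_comm[OF P X Q] P X Q Y closed by (simp add: m_assoc)
  also have "P \<otimes> Q \<otimes> (X \<otimes> Y) = inv (conj G P (comm G (X \<otimes> Y) Q)) \<otimes> (P \<otimes> (X \<otimes> Y) \<otimes> Q)"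
    using mult_eq_conj_comm[OF P _ Q, of "X \<otimes> Y"] P X Q Y closed by simp
  finally show ?thesis
    using P X Q Y closed by (simp add: m_assoc)
qed

lemma int_pow_mod_eq:
  assumes "x \<in> carrier G" "x [^] m = \<one>" "a mod int m = b mod int m"
  shows "x [^] (a::int) = x [^] b"
proof -
  have "x [^] (int m * c) = \<one>" for c
    using assms(1,2) by (simp add: int_pow_pow [symmetric] int_pow_int)
  then have "x [^] (a mod int m) = x [^] a" for a
    using assms(1) int_pow_mult[of x "int m * (a div int m)" "a mod int m"] by simp
  then show ?thesis
    using assms(3) by metis
qed

end

context group
begin

lemma eval_word_hom_to_free_grp:
  assumes B: "B \<subseteq> carrier G"
    and hom: "\<psi> \<in> hom (subgroup_generated G B) (free_grp B)"
    and letters: "\<And>b. b \<in> B \<Longrightarrow> \<psi> b = [(b, False)]"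
    and c: "c \<in> carrier (subgroup_generated G B)"
  shows "eval_word G (\<psi> c) = c"
proof -
  interpret \<psi>: group_hom "subgroup_generated G B" "free_grp B" \<psi>
    using hom free_grp_group by (intro group_hom.intro group_hom_axioms.intro) simp_all
  have carrier_F: "carrier (subgroup_generated G B) = generate G B"
    using B by (simp add: carrier_subgroup_generated Int_absorb1)
  show ?thesis
    using c unfolding carrier_F
  proof (induction c rule: generate.induct)
    case one
    show ?case
      using \<psi>.hom_one by (simp add: one_free_grp)
  next
    case (incl b)
    then show ?case
      using B by (auto simp: letters eval_word_Cons)
  next
    case (inv b)
    then have "\<psi> (inv b) = word_inv [(b, False)]"
      using \<psi>.hom_inv[of b] B
      by (simp add: carrier_F generate.incl letters inv_free_grp carrier_free_grp)
    with inv B show ?case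
      by (auto simp: word_inv_def inv_letter_def eval_word_Cons)
  next
    case (eng c d)
    then have "\<psi> (c \<otimes> d) = reduce (\<psi> c @ \<psi> d)"
      using \<psi>.hom_mult[of c d] by (simp add: carrier_F mult_free_grp)
    moreover have "word_over (carrier G) (\<psi> c)" "word_over (carrier G) (\<psi> d)"
      using \<psi>.hom_closed[of c] \<psi>.hom_closed[of d] eng.hyps B
      by (auto simp: carrier_F carrier_free_grp intro: word_over_mono)
    ultimately show ?case
      using eng.IH by (simp add: eval_word_reduce eval_word_append)
  qed
qed

lemma hom_to_free_grp_eval_word:
  assumes B: "B \<subseteq> carrier G"
    and hom: "\<psi> \<in> hom (subgroup_generated G B) (free_grp B)"
    and letters: "\<And>b. b \<in> B \<Longrightarrow> \<psi> b = [(b, False)]"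
    and x: "x \<in> carrier (free_grp B)"
  shows "\<psi> (eval_word G x) = x"
proof -
  interpret \<psi>: group_hom "subgroup_generated G B" "free_grp B" \<psi>
    using hom free_grp_group by (intro group_hom.intro group_hom_axioms.intro) simp_all
  have carrier_F: "carrier (subgroup_generated G B) = generate G B"
    using B by (simp add: carrier_subgroup_generated Int_absorb1)
  show ?thesis
    using x
  proof (induction x)
    case Nil
    show ?case
      using \<psi>.hom_one by (simp add: one_free_grp)
  next
    case (Cons a x)
    obtain b s where a: "a = (b, s)"
      by fastforce
    have b: "b \<in> B" and x: "x \<in> carrier (free_grp B)" and reduced: "reduced (a # x)"
      using Cons.prems a by (auto simp: carrier_free_grp dest: reduced_ConsD)
    have b_in_F: "b \<in> carrier (subgroup_generated G B)"
      using b B by (simp add: carrier_F generate.incl)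
    have "\<psi> (if s then inv b else b) = [a]"
      using \<psi>.hom_inv[OF b_in_F] b_in_F a
      by (simp add: letters[OF b] inv_free_grp inv_letter_def carrier_free_grp b)
    moreover have "(if s then inv b else b) \<in> carrier (subgroup_generated G B)"
      using b B by (simp add: carrier_F generate.inv generate.incl)
    moreover have "eval_word G x \<in> carrier (subgroup_generated G B)"
      using x B by (simp add: carrier_F carrier_free_grp eval_word_in_generate)
    ultimately have "\<psi> (eval_word G (a # x)) = reduce ([a] @ \<psi> (eval_word G x))"
      using \<psi>.hom_mult a by (simp add: eval_word_Cons mult_free_grp)
    then show ?case
      using Cons.IH[OF x] reduced by (simp add: reduce_reduced)
  qed
qed

text \<open>The inverse isomorphism is evaluation of words.\<close>

lemma iso_free_grp_if_letters:
  assumes B: "B \<subseteq> carrier G"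
    and hom: "\<psi> \<in> hom (subgroup_generated G B) (free_grp B)"
    and letters: "\<And>b. b \<in> B \<Longrightarrow> \<psi> b = [(b, False)]"
  shows "\<psi> \<in> iso (subgroup_generated G B) (free_grp B)"
proof -
  have "eval_word G x \<in> carrier (subgroup_generated G B)" if "x \<in> carrier (free_grp B)" for x
    using that B by (simp add: carrier_subgroup_generated Int_absorb1 carrier_free_grp
        eval_word_in_generate)
  then have "bij_betw \<psi> (carrier (subgroup_generated G B)) (carrier (free_grp B))"
    using eval_word_hom_to_free_grp[OF assms] hom_to_free_grp_eval_word[OF assms]
      hom_in_carrier[OF hom]
    by (intro bij_betw_byWitness[where f' = "eval_word G"]) auto
  then show ?thesis
    using hom by (simp add: iso_def)
qed

lemma rcosets_eq_image_transversal:
  assumes H: "subgroup H G" and t: "t ` V \<subseteq> carrier G"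
    and covers: "\<And>g. g \<in> carrier G \<Longrightarrow> \<exists>v\<in>V. g \<otimes> inv (t v) \<in> H"
  shows "rcosets H = (\<lambda>v. H #> t v) ` V"
proof (intro equalityI subsetI)
  fix C
  assume "C \<in> rcosets H"
  then obtain g where g: "g \<in> carrier G" and C: "C = H #> g"
    by (auto simp: RCOSETS_def)
  obtain v where v: "v \<in> V" "g \<otimes> inv (t v) \<in> H"
    using covers[OF g] by blast
  then have "g \<in> H #> t v"
    using subgroup.rcos_module_rev[OF H is_group] g t by blast
  then have "C = H #> t v"
    using C repr_independence[OF _ _ H] t v(1) by auto
  with v show "C \<in> (\<lambda>v. H #> t v) ` V"
    by blast
next
  fix C
  assume "C \<in> (\<lambda>v. H #> t v) ` V"
  then show "C \<in> rcosets H"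
    using rcosetsI subgroup.subset[OF H] t by blast
qed

lemma card_rcosets_eq_card_transversal:
  assumes H: "subgroup H G" and t: "t ` V \<subseteq> carrier G"
    and covers: "\<And>g. g \<in> carrier G \<Longrightarrow> \<exists>v\<in>V. g \<otimes> inv (t v) \<in> H"
    and separates: "\<And>v w. v \<in> V \<Longrightarrow> w \<in> V \<Longrightarrow> t v \<otimes> inv (t w) \<in> H \<Longrightarrow> v = w"
  shows "card (rcosets H) = card V"
proof -
  have "inj_on (\<lambda>v. H #> t v) V"
  proof (rule inj_onI)
    fix v w
    assume v: "v \<in> V" and w: "w \<in> V" and eq: "H #> t v = H #> t w"
    then have "t v \<in> H #> t w"
      using rcos_self[OF _ H, of "t v"] t by auto
    then have "t v \<otimes> inv (t w) \<in> H"
      using subgroup.rcos_module_imp[OF H is_group] t w by blast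
    then show "v = w"
      using separates v w by blast
  qed
  then show ?thesis
    using rcosets_eq_image_transversal[OF H t covers] by (simp add: card_image)
qed

end

fun letter_exp :: "(nat + nat) \<times> bool \<Rightarrow> nat \<Rightarrow> int" where
  "letter_exp (Inl j, b) = (\<lambda>i. if i = j then (if b then -1 else 1) else 0)"
| "letter_exp (Inr l, b) = 0"

definition exp_sum :: "(nat + nat) word \<Rightarrow> nat \<Rightarrow> int" where
  "exp_sum w = sum_list (map letter_exp w)"

lemma exp_sum_Nil [simp]: "exp_sum [] = 0"
  and exp_sum_Cons [simp]: "exp_sum (x # w) = letter_exp x + exp_sum w"
  and exp_sum_append [simp]: "exp_sum (u @ v) = exp_sum u + exp_sum v"
  by (simp_all add: exp_sum_def)

lemma letter_exp_inv_letter [simp]: "letter_exp (inv_letter x) = - letter_exp x"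
  by (cases x rule: letter_exp.cases) (auto simp: inv_letter_def)

lemma exp_sum_word_inv [simp]: "exp_sum (word_inv w) = - exp_sum w"
  by (induction w) (simp_all add: word_inv_Cons fun_eq_iff)

lemma exp_sum_cons_red: "exp_sum (cons_red a w) = letter_exp a + exp_sum w"
  by (cases w) (auto simp: fun_eq_iff)

lemma exp_sum_reduce [simp]: "exp_sum (reduce w) = exp_sum w"
  by (induction w) (simp_all add: reduce_Cons exp_sum_cons_red)

lemma exp_sum_replicate_Inl:
  "exp_sum (replicate c (Inl j, b)) = (\<lambda>i. if i = j then (if b then - int c else int c) else 0)"
  by (induction c) (auto simp: fun_eq_iff)

locale cyclic_free_product =
  fixes k n :: nat and m :: "nat \<Rightarrow> nat"
  assumes orders_pos: "\<And>i. i \<in> {1..k} \<Longrightarrow> 0 < m i"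
begin

abbreviation "FG \<equiv> free_grp (gens k n)"
abbreviation "R \<equiv> rel_closure k n m"
abbreviation "G \<equiv> pres_grp k n m"
abbreviation "e \<equiv> gen_e k n m"
abbreviation "h \<equiv> gen_h k n m"

abbreviation gen_word :: "(nat + nat) word \<Rightarrow> bool" where
  "gen_word w \<equiv> word_over (gens k n) w"

lemma Inl_in_gens [simp]: "Inl i \<in> gens k n \<longleftrightarrow> i \<in> {1..k}"
  and Inr_in_gens [simp]: "Inr l \<in> gens k n \<longleftrightarrow> l \<in> {1..2*n}"
  by (auto simp: gens_def)

sublocale FG: group FG
  by (rule free_grp_group)

lemma relators_conj_eq:
  "{reduce (g @ r @ word_inv g) | g r. g \<in> carrier FG \<and> r \<in> relators k m}
    = {g \<otimes>\<^bsub>FG\<^esub> r \<otimes>\<^bsub>FG\<^esub> inv\<^bsub>FG\<^esub> g | g r. g \<in> carrier FG \<and> r \<in> relators k m}"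
  by (metis (no_types, opaque_lifting) inv_free_grp mult_free_grp reduce_append_reduce_left append_assoc)

lemma relators_subset: "relators k m \<subseteq> carrier FG"
  by (auto simp: relators_def carrier_free_grp reduced_replicate)

lemma normal_rel_closure: "R \<lhd> FG"
proof -
  let ?S = "{g \<otimes>\<^bsub>FG\<^esub> r \<otimes>\<^bsub>FG\<^esub> inv\<^bsub>FG\<^esub> g | g r. g \<in> carrier FG \<and> r \<in> relators k m}"
  have "generate FG ?S \<lhd> FG"
  proof (rule FG.normal_generateI)
    show "?S \<subseteq> carrier FG"
      using relators_subset by auto
    fix x g
    assume "x \<in> ?S" and g: "g \<in> carrier FG"
    then obtain g' r where x: "x = g' \<otimes>\<^bsub>FG\<^esub> r \<otimes>\<^bsub>FG\<^esub> inv\<^bsub>FG\<^esub> g'"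
      and g': "g' \<in> carrier FG" and r: "r \<in> relators k m"
      by blast
    have "g \<otimes>\<^bsub>FG\<^esub> x \<otimes>\<^bsub>FG\<^esub> inv\<^bsub>FG\<^esub> g
        = (g \<otimes>\<^bsub>FG\<^esub> g') \<otimes>\<^bsub>FG\<^esub> r \<otimes>\<^bsub>FG\<^esub> inv\<^bsub>FG\<^esub> (g \<otimes>\<^bsub>FG\<^esub> g')"
      using g g' r relators_subset by (auto simp: x FG.m_assoc FG.inv_mult_group)
    then show "g \<otimes>\<^bsub>FG\<^esub> x \<otimes>\<^bsub>FG\<^esub> inv\<^bsub>FG\<^esub> g \<in> ?S"
      using g g' r by blast
  qed
  then show ?thesis
    unfolding rel_closure_def relators_conj_eq .
qed

sublocale R: normal R FG
  by (rule normal_rel_closure)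

sublocale G: group G
  unfolding pres_grp_def by (rule R.factorgroup_is_group)

definition cls :: "(nat + nat) word \<Rightarrow> (nat + nat) word set" where
  "cls w = R #>\<^bsub>FG\<^esub> reduce w"

lemma cls_closed [simp]: "gen_word w \<Longrightarrow> cls w \<in> carrier G"
  unfolding cls_def pres_grp_def carrier_FactGroup
  using word_over_reduce by (fastforce simp: carrier_free_grp)

lemma cls_append: "gen_word u \<Longrightarrow> gen_word v \<Longrightarrow> cls (u @ v) = cls u \<otimes>\<^bsub>G\<^esub> cls v"
  unfolding cls_def pres_grp_def FactGroup_def
  by (simp add: R.rcos_sum carrier_free_grp word_over_reduce mult_free_grp)

lemma cls_Nil [simp]: "cls [] = \<one>\<^bsub>G\<^esub>"
  unfolding cls_def pres_grp_def
  using FG.coset_mult_one R.subset by (simp add: one_free_grp)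

lemma cls_reduce [simp]: "cls (reduce w) = cls w"
  by (simp add: cls_def)

lemma cls_word_inv: "gen_word w \<Longrightarrow> cls (word_inv w) = inv\<^bsub>G\<^esub> cls w"
proof -
  assume w: "gen_word w"
  have "cls (word_inv w) \<otimes>\<^bsub>G\<^esub> cls w = cls (word_inv w @ w)"
    using w by (simp add: cls_append)
  also have "\<dots> = cls (reduce (word_inv w @ w))"
    by (simp only: cls_reduce)
  also have "\<dots> = \<one>\<^bsub>G\<^esub>"
    by simp
  finally show ?thesis
    using w by (intro G.inv_equality[symmetric]) simp_all
qed

lemma cls_surj: "c \<in> carrier G \<Longrightarrow> \<exists>w. gen_word w \<and> c = cls w"
proof -
  assume "c \<in> carrier G"
  then obtain w where "w \<in> carrier FG" "c = R #>\<^bsub>FG\<^esub> w"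
    unfolding pres_grp_def carrier_FactGroup RCOSETS_def by blast
  then show ?thesis
    by (intro exI[of _ w]) (simp add: cls_def carrier_free_grp reduce_reduced)
qed

lemma cls_one_if_rel: "r \<in> R \<Longrightarrow> cls r = \<one>\<^bsub>G\<^esub>"
proof -
  assume r: "r \<in> R"
  then have "cls r = R #>\<^bsub>FG\<^esub> r"
    using R.subset by (auto simp: cls_def carrier_free_grp reduce_reduced)
  also have "\<dots> = R"
    by (rule R.rcos_const[OF FG.is_group r])
  finally show ?thesis
    by (simp add: pres_grp_def FactGroup_def)
qed

lemma cls_eq_imp:
  assumes "gen_word w" "gen_word w'" "cls w' = cls w"
  shows "\<exists>r\<in>R. reduce w' = reduce (r @ w)"
proof -
  have "reduce w' \<in> cls w'"
    using FG.rcos_self[OF _ R.subgroup_axioms] assms(2)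
    by (simp add: cls_def carrier_free_grp word_over_reduce)
  then obtain r where "r \<in> R" "reduce w' = r \<otimes>\<^bsub>FG\<^esub> reduce w"
    using assms(3) by (auto simp: cls_def r_coset_def)
  then show ?thesis
    by (auto simp: mult_free_grp)
qed

lemma e_eq_cls: "e i = cls [(Inl i, False)]"
  and h_eq_cls: "h l = cls [(Inr l, False)]"
  by (simp_all add: gen_e_def gen_h_def cls_def reduce_Cons)

lemma e_closed [simp]: "i \<in> {1..k} \<Longrightarrow> e i \<in> carrier G"
  and h_closed [simp]: "l \<in> {1..2*n} \<Longrightarrow> h l \<in> carrier G"
  by (simp_all add: e_eq_cls h_eq_cls)

lemma cls_replicate: "fst x \<in> gens k n \<Longrightarrow> cls (replicate c x) = cls [x] [^]\<^bsub>G\<^esub> c"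
proof (induction c)
  case (Suc c)
  have "replicate (Suc c) x = replicate c x @ [x]"
    by (simp add: replicate_append_same)
  with Suc show ?case
    using cls_append[of "replicate c x" "[x]"] by simp
qed simp

lemma e_pow_order: "i \<in> {1..k} \<Longrightarrow> e i [^]\<^bsub>G\<^esub> m i = \<one>\<^bsub>G\<^esub>"
proof -
  assume i: "i \<in> {1..k}"
  let ?r = "replicate (m i) (Inl i, False)"
  have "?r \<in> relators k m"
    using i by (auto simp: relators_def)
  then have "reduce ([] @ ?r @ word_inv []) \<in> R"
    unfolding rel_closure_def
    by (intro generate.incl) (fastforce simp: carrier_free_grp)
  then show ?thesis
    using i cls_one_if_rel cls_replicate[of "(Inl i, False)" "m i"]
    by (simp add: e_eq_cls reduce_reduced reduced_replicate)
qed

end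

section \<open>The Reidemeister--Schreier rewriting process\<close>

context cyclic_free_product
begin

text \<open>A state \<open>s :: nat \<Rightarrow> int\<close> stands for the transversal element
  \<open>e\<^sub>k\<^sup>s\<^sup>k \<cdots> e\<^sub>1\<^sup>s\<^sup>1\<close>; only its residues modulo the \<open>m i\<close>, its digits, matter.\<close>

definition digit :: "(nat \<Rightarrow> int) \<Rightarrow> nat \<Rightarrow> int" where
  "digit s i = s i mod int (m i)"

definition same_digits :: "(nat \<Rightarrow> int) \<Rightarrow> (nat \<Rightarrow> int) \<Rightarrow> bool" (infix "\<approx>" 50) where
  "s \<approx> s' \<longleftrightarrow> (\<forall>i\<in>{1..k}. digit s i = digit s' i)"

lemma same_digits_refl [simp]: "s \<approx> s"
  and same_digits_sym: "s \<approx> s' \<Longrightarrow> s' \<approx> s"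
  and same_digits_trans: "s \<approx> s' \<Longrightarrow> s' \<approx> s'' \<Longrightarrow> s \<approx> s''"
  by (simp_all add: same_digits_def)

lemma same_digits_add: "s \<approx> s' \<Longrightarrow> d \<approx> d' \<Longrightarrow> s + d \<approx> s' + d'"
  unfolding same_digits_def digit_def by (auto intro: mod_add_cong)

lemma e_pow_cong:
  fixes s s' :: "nat \<Rightarrow> int"
  shows "i \<in> {1..k} \<Longrightarrow> digit s i = digit s' i \<Longrightarrow> e i [^]\<^bsub>G\<^esub> s i = e i [^]\<^bsub>G\<^esub> s' i"
  unfolding digit_def by (rule G.int_pow_mod_eq[OF e_closed e_pow_order])

lemma dprod_e_pow_closed [simp]:
  fixes s :: "nat \<Rightarrow> int"
  shows "1 \<le> lo \<Longrightarrow> hi \<le> k \<Longrightarrow> dprod G (\<lambda>i. e i [^]\<^bsub>G\<^esub> s i) lo hi \<in> carrier G"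
  by (intro G.dprod_closed G.int_pow_closed e_closed) auto

lemma dprod_e_pow_cong:
  fixes s s' :: "nat \<Rightarrow> int"
  shows "(\<And>i. i \<in> {lo..hi} \<Longrightarrow> digit s i = digit s' i) \<Longrightarrow> 1 \<le> lo \<Longrightarrow> hi \<le> k \<Longrightarrow>
    dprod G (\<lambda>i. e i [^]\<^bsub>G\<^esub> s i) lo hi = dprod G (\<lambda>i. e i [^]\<^bsub>G\<^esub> s' i) lo hi"
  by (intro G.dprod_cong e_pow_cong) auto

definition transversal :: "(nat \<Rightarrow> int) \<Rightarrow> (nat + nat) word set" where
  "transversal s = dprod G (\<lambda>i. e i [^]\<^bsub>G\<^esub> s i) 1 k"

definition upper_part :: "(nat \<Rightarrow> int) \<Rightarrow> nat \<Rightarrow> (nat + nat) word set" where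
  "upper_part s j = dprod G (\<lambda>i. e i [^]\<^bsub>G\<^esub> s i) (Suc j) k"

definition lower_part :: "(nat \<Rightarrow> int) \<Rightarrow> nat \<Rightarrow> (nat + nat) word set" where
  "lower_part s j = dprod G (\<lambda>i. e i [^]\<^bsub>G\<^esub> s i) 1 (j - 1)"

lemma transversal_closed [simp]: "transversal s \<in> carrier G"
  and upper_part_closed [simp]: "upper_part s j \<in> carrier G"
  and lower_part_closed [simp]: "j \<le> Suc k \<Longrightarrow> lower_part s j \<in> carrier G"
  by (simp_all add: transversal_def upper_part_def lower_part_def)

lemma transversal_cong: "s \<approx> s' \<Longrightarrow> transversal s = transversal s'"
  unfolding transversal_def same_digits_def by (intro dprod_e_pow_cong) auto

lemma transversal_zero [simp]: "transversal 0 = \<one>\<^bsub>G\<^esub>"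
  unfolding transversal_def by (intro G.dprod_eq_one) simp

lemma transversal_split:
  "j \<in> {1..k} \<Longrightarrow> transversal s = upper_part s j \<otimes>\<^bsub>G\<^esub> e j [^]\<^bsub>G\<^esub> s j \<otimes>\<^bsub>G\<^esub> lower_part s j"
  unfolding transversal_def upper_part_def lower_part_def by (intro G.dprod_split) auto

lemma upper_part_cong: "(\<And>i. i \<in> {Suc j..k} \<Longrightarrow> digit s i = digit s' i) \<Longrightarrow> upper_part s j = upper_part s' j"
  unfolding upper_part_def by (intro dprod_e_pow_cong) auto

lemma lower_part_cong:
  "(\<And>i. i \<in> {1..<j} \<Longrightarrow> digit s i = digit s' i) \<Longrightarrow> j \<le> Suc k \<Longrightarrow> lower_part s j = lower_part s' j"
  unfolding lower_part_def by (intro dprod_e_pow_cong) auto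

text \<open>\<open>sgen s j\<close> is the element \<open>\<^sup>g\<^sup>\<xi>f\<^sub>\<lambda>\<close> of the paper for \<open>t = j\<close>, with \<open>\<lambda>\<close> and \<open>\<xi>\<close>
  read off from the exponents in \<open>s\<close>. It belongs to \<open>S\<^sub>1\<close> if \<open>is_sgen s j\<close> and is trivial
  otherwise (\<open>eval_sgen_word\<close>).\<close>

definition sgen :: "(nat \<Rightarrow> int) \<Rightarrow> nat \<Rightarrow> (nat + nat) word set" where
  "sgen s j = conj G (upper_part s j) (comm G (e j [^]\<^bsub>G\<^esub> s j) (lower_part s j))"

definition is_sgen :: "(nat \<Rightarrow> int) \<Rightarrow> nat \<Rightarrow> bool" where
  "is_sgen s j \<longleftrightarrow> digit s j \<noteq> 0 \<and> (\<exists>i\<in>{1..<j}. digit s i \<noteq> 0)"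

definition sgen_word :: "(nat \<Rightarrow> int) \<Rightarrow> nat \<Rightarrow> (nat + nat) word set word" where
  "sgen_word s j = (if is_sgen s j then [(sgen s j, False)] else [])"

lemma sgen_word_cong: "j \<in> {1..k} \<Longrightarrow> s \<approx> s' \<Longrightarrow> sgen_word s j = sgen_word s' j"
proof -
  assume j: "j \<in> {1..k}" and s: "s \<approx> s'"
  have digits: "digit s i = digit s' i" if "i \<in> {1..k}" for i
    using s that by (simp add: same_digits_def)
  have "upper_part s j = upper_part s' j" "lower_part s j = lower_part s' j"
    using j digits by (auto intro!: upper_part_cong lower_part_cong)
  moreover have "e j [^]\<^bsub>G\<^esub> s j = e j [^]\<^bsub>G\<^esub> s' j"
    using j digits by (intro e_pow_cong)
  ultimately have "sgen s j = sgen s' j"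
    by (simp add: sgen_def)
  moreover have "is_sgen s j = is_sgen s' j"
    unfolding is_sgen_def using j digits by auto
  ultimately show ?thesis
    by (simp add: sgen_word_def)
qed

fun rewrite_letter :: "(nat \<Rightarrow> int) \<Rightarrow> (nat + nat) \<times> bool \<Rightarrow> (nat + nat) word set word" where
  "rewrite_letter s (Inl j, b) = sgen_word s j @ word_inv (sgen_word (s + letter_exp (Inl j, b)) j)"
| "rewrite_letter s (Inr l, b) = [(conj G (transversal s) (h l), b)]"

fun rewrite :: "(nat \<Rightarrow> int) \<Rightarrow> (nat + nat) word \<Rightarrow> (nat + nat) word set word" where
  "rewrite s [] = []"
| "rewrite s (x # w) = rewrite_letter s x @ rewrite (s + letter_exp x) w"

lemma rewrite_append: "rewrite s (u @ v) = rewrite s u @ rewrite (s + exp_sum u) v"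
  by (induction u arbitrary: s) (simp_all add: add.assoc)

lemma rewrite_letter_cong:
  assumes x: "fst x \<in> gens k n" and s: "s \<approx> s'"
  shows "rewrite_letter s x = rewrite_letter s' x"
proof -
  obtain y b where xyb: "x = (y, b)"
    by fastforce
  show ?thesis
  proof (cases y)
    case (Inl j)
    then have j: "j \<in> {1..k}"
      using x xyb by simp
    have "s + letter_exp x \<approx> s' + letter_exp x"
      using same_digits_add[OF s same_digits_refl] .
    then show ?thesis
      using sgen_word_cong[OF j s] sgen_word_cong[OF j] by (simp add: xyb Inl)
  next
    case (Inr l)
    then show ?thesis
      using xyb s transversal_cong by simp
  qed
qed

lemma rewrite_cong: "gen_word w \<Longrightarrow> s \<approx> s' \<Longrightarrow> rewrite s w = rewrite s' w"
proof (induction w arbitrary: s s')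
  case (Cons x w)
  have shifted: "s + letter_exp x \<approx> s' + letter_exp x"
    using same_digits_add[OF Cons.prems(2) same_digits_refl] .
  have "gen_word w"
    using Cons.prems by simp
  note tail = Cons.IH[OF this shifted]
  moreover have "rewrite_letter s x = rewrite_letter s' x"
    using rewrite_letter_cong Cons.prems by simp
  ultimately show ?case
    by (simp add: plus_fun_def)
qed simp

lemma rewrite_letter_cancel:
  "reduce (rewrite_letter s x @ rewrite_letter (s + letter_exp x) (inv_letter x)) = []"
proof -
  obtain y b where x: "x = (y, b)"
    by fastforce
  show ?thesis
  proof (cases y)
    case (Inl j)
    let ?s' = "s + letter_exp (Inl j, b)"
    have undo: "?s' + letter_exp (Inl j, \<not> b) = s"
      by (simp add: fun_eq_iff)
    have "rewrite_letter s x @ rewrite_letter (s + letter_exp x) (inv_letter x)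
        = sgen_word s j @ word_inv (sgen_word ?s' j) @ sgen_word ?s' j @ word_inv (sgen_word s j)"
      by (simp only: x Inl inv_letter_def fst_conv snd_conv rewrite_letter.simps undo append_assoc)
    then show ?thesis
      by (simp add: reduce_cancel_middle)
  next
    case (Inr l)
    then show ?thesis
      by (simp add: x inv_letter_def reduce_Cons)
  qed
qed

lemma rewrite_cons_red: "reduce (rewrite s (cons_red a w)) = reduce (rewrite s (a # w))"
proof (cases w)
  case (Cons b v)
  show ?thesis
  proof (cases "b = inv_letter a")
    case True
    have "rewrite s (a # w)
        = (rewrite_letter s a @ rewrite_letter (s + letter_exp a) (inv_letter a)) @ rewrite s v"
      by (simp add: Cons True)
    then show ?thesis
      using reduce_Nil_append[OF rewrite_letter_cancel] by (simp add: Cons True)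
  qed (simp add: Cons)
qed simp

lemma rewrite_reduce: "reduce (rewrite s (reduce w)) = reduce (rewrite s w)"
proof (induction w arbitrary: s)
  case (Cons a w)
  have "reduce (rewrite s (reduce (a # w))) = reduce (rewrite s (a # reduce w))"
    by (simp add: reduce_Cons rewrite_cons_red)
  also have "\<dots> = reduce (rewrite_letter s a @ reduce (rewrite (s + letter_exp a) (reduce w)))"
    by simp
  also have "\<dots> = reduce (rewrite s (a # w))"
    using Cons.IH by (simp add: plus_fun_def)
  finally show ?case .
qed simp

lemma rewrite_word_inv:
  "reduce (rewrite (s + exp_sum w) (word_inv w)) = reduce (word_inv (rewrite s w))"
proof (rule reduce_eq_word_inv)
  have "reduce (rewrite s w @ rewrite (s + exp_sum w) (word_inv w)) = reduce (rewrite s (w @ word_inv w))"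
    by (simp add: rewrite_append)
  also have "\<dots> = reduce (rewrite s (reduce (w @ word_inv w)))"
    by (simp only: rewrite_reduce)
  finally show "reduce (rewrite s w @ rewrite (s + exp_sum w) (word_inv w)) = []"
    by simp
qed

text \<open>Along a power of a single generator \<open>e\<^sub>j\<close> the rewriting telescopes.\<close>

lemma rewrite_power:
  "word_over {Inl j} w \<Longrightarrow>
    reduce (rewrite s w) = reduce (sgen_word s j @ word_inv (sgen_word (s + exp_sum w) j))"
proof (induction w rule: rev_induct)
  case (snoc x w)
  then obtain b where x: "x = (Inl j, b)"
    by (cases x) auto
  let ?D = "\<lambda>s. sgen_word s j"
  have "reduce (rewrite s (w @ [x]))
      = reduce (reduce (rewrite s w) @ rewrite_letter (s + exp_sum w) x)"
    by (simp add: rewrite_append)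
  also have "\<dots> = reduce (?D s @ word_inv (?D (s + exp_sum w)) @ ?D (s + exp_sum w)
      @ word_inv (?D (s + exp_sum w + letter_exp x)))"
    using snoc by (simp add: x plus_fun_def)
  also have "\<dots> = reduce (?D s @ word_inv (?D (s + exp_sum (w @ [x]))))"
    by (simp add: reduce_cancel_middle add.assoc)
  finally show ?case .
qed simp

lemma rewrite_relator:
  assumes j: "j \<in> {1..k}"
  shows "reduce (rewrite s (replicate (m j) (Inl j, False))) = []"
proof -
  have "s + exp_sum (replicate (m j) (Inl j, False)) \<approx> s"
    by (simp add: same_digits_def digit_def exp_sum_replicate_Inl)
  then have "sgen_word (s + exp_sum (replicate (m j) (Inl j, False))) j = sgen_word s j"
    using sgen_word_cong[OF j] by blast
  moreover have "reduce (rewrite s (replicate (m j) (Inl j, False)))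
      = reduce (sgen_word s j @ word_inv (sgen_word (s + exp_sum (replicate (m j) (Inl j, False))) j))"
    by (rule rewrite_power) simp
  ultimately show ?thesis
    by simp
qed

end

context cyclic_free_product
begin

lemma same_digits_add_zero: "d \<approx> 0 \<Longrightarrow> s + d \<approx> s"
  using same_digits_add[OF same_digits_refl, of d 0 s] by simp

lemma same_digits_uminus: "s \<approx> s' \<Longrightarrow> - s \<approx> - s'"
  unfolding same_digits_def digit_def by (auto intro: mod_minus_cong)

definition rewrites_trivially :: "(nat + nat) word set" where
  "rewrites_trivially = {r \<in> carrier FG. (\<forall>s. reduce (rewrite s r) = []) \<and> exp_sum r \<approx> 0}"

lemma subgroup_rewrites_trivially: "subgroup rewrites_trivially FG"
proof (rule FG.subgroupI)
  show "rewrites_trivially \<subseteq> carrier FG"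
    by (auto simp: rewrites_trivially_def)
  show "rewrites_trivially \<noteq> {}"
    by (auto simp: rewrites_trivially_def carrier_free_grp intro!: exI[of _ "[]"])
next
  fix r
  assume "r \<in> rewrites_trivially"
  then have r: "r \<in> carrier FG" "\<And>s. reduce (rewrite s r) = []" "exp_sum r \<approx> 0"
    by (auto simp: rewrites_trivially_def)
  have "reduce (rewrite s (word_inv r)) = []" for s
  proof -
    have "s = (s - exp_sum r) + exp_sum r"
      by simp
    then have "reduce (rewrite s (word_inv r)) = reduce (word_inv (rewrite (s - exp_sum r) r))"
      by (metis rewrite_word_inv)
    then show ?thesis
      using r(2) by (simp add: reduce_word_inv)
  qed
  moreover have "word_inv r \<in> carrier FG"
    using r(1) by (simp add: carrier_free_grp reduced_word_inv)
  ultimately show "inv\<^bsub>FG\<^esub> r \<in> rewrites_trivially"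
    using r same_digits_uminus[OF r(3)] by (simp add: rewrites_trivially_def inv_free_grp)
next
  fix r r'
  assume "r \<in> rewrites_trivially" "r' \<in> rewrites_trivially"
  then have r: "r \<in> carrier FG" "\<And>s. reduce (rewrite s r) = []" "exp_sum r \<approx> 0"
    and r': "r' \<in> carrier FG" "\<And>s. reduce (rewrite s r') = []" "exp_sum r' \<approx> 0"
    by (auto simp: rewrites_trivially_def)
  have "reduce (rewrite s (reduce (r @ r'))) = []" for s
  proof -
    have "reduce (rewrite s (reduce (r @ r')))
        = reduce (reduce (rewrite s r) @ reduce (rewrite (s + exp_sum r) r'))"
      by (simp add: rewrite_reduce rewrite_append)
    then show ?thesis
      using r(2) r'(2) by simp
  qed
  then show "r \<otimes>\<^bsub>FG\<^esub> r' \<in> rewrites_trivially"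
    using r r' FG.m_closed[OF r(1) r'(1)] same_digits_add[OF r(3) r'(3)]
    by (simp add: rewrites_trivially_def mult_free_grp)
qed

lemma relator_conj_rewrites_trivially:
  assumes g: "g \<in> carrier FG" and r: "r \<in> relators k m"
  shows "reduce (g @ r @ word_inv g) \<in> rewrites_trivially"
proof -
  obtain j where j: "j \<in> {1..k}" and r_def: "r = replicate (m j) (Inl j, False)"
    using r by (auto simp: relators_def)
  have g_gen: "gen_word g"
    using g by (simp add: carrier_free_grp)
  have exp_r: "exp_sum r \<approx> 0"
    by (simp add: r_def same_digits_def digit_def exp_sum_replicate_Inl)
  have "reduce (rewrite s (reduce (g @ r @ word_inv g))) = []" for s
  proof -
    let ?s = "s + exp_sum g"
    have inv_g: "rewrite (?s + exp_sum r) (word_inv g) = rewrite ?s (word_inv g)"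
      using g_gen same_digits_add_zero[OF exp_r] by (intro rewrite_cong) simp_all
    have "reduce (rewrite s (reduce (g @ r @ word_inv g)))
        = reduce (rewrite s g @ reduce (rewrite ?s r) @ reduce (rewrite ?s (word_inv g)))"
      by (simp add: rewrite_reduce rewrite_append inv_g)
    also have "\<dots> = reduce (rewrite s g @ word_inv (rewrite s g))"
      using j by (simp add: r_def rewrite_relator rewrite_word_inv)
    finally show ?thesis
      by simp
  qed
  moreover have "reduce (g @ r @ word_inv g) \<in> carrier FG"
    using g j by (simp add: carrier_free_grp word_over_reduce r_def)
  moreover have "exp_sum (reduce (g @ r @ word_inv g)) \<approx> 0"
    using exp_r by (simp add: add.left_commute)
  ultimately show ?thesis
    by (simp add: rewrites_trivially_def)
qed

lemma rel_closure_rewrites_trivially: "R \<subseteq> rewrites_trivially"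
  unfolding rel_closure_def
  by (rule FG.generate_subgroup_incl)
     (auto intro: relator_conj_rewrites_trivially subgroup_rewrites_trivially)

lemma rewrite_cls_eq:
  assumes "gen_word w" "gen_word w'" "cls w' = cls w"
  shows "reduce (rewrite s w') = reduce (rewrite s w)"
proof -
  obtain r where r: "r \<in> R" "reduce w' = reduce (r @ w)"
    using cls_eq_imp[OF assms] by blast
  then have triv: "reduce (rewrite s r) = []" "exp_sum r \<approx> 0"
    using rel_closure_rewrites_trivially by (auto simp: rewrites_trivially_def)
  have "reduce (rewrite s w') = reduce (rewrite s (reduce (r @ w)))"
    using rewrite_reduce[of s w'] r(2) by simp
  also have "\<dots> = reduce (reduce (rewrite s r) @ rewrite (s + exp_sum r) w)"
    by (simp add: rewrite_reduce rewrite_append)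
  also have "\<dots> = reduce (rewrite s w)"
    using triv rewrite_cong[OF assms(1) same_digits_add_zero[OF triv(2)]] by simp
  finally show ?thesis .
qed

lemma exp_sum_cls_eq:
  assumes "gen_word w" "gen_word w'" "cls w' = cls w"
  shows "exp_sum w' \<approx> exp_sum w"
proof -
  obtain r where r: "r \<in> R" "reduce w' = reduce (r @ w)"
    using cls_eq_imp[OF assms] by blast
  then have "exp_sum w' = exp_sum w + exp_sum r"
    by (metis exp_sum_reduce exp_sum_append add.commute)
  then show ?thesis
    using r(1) rel_closure_rewrites_trivially same_digits_add_zero
    by (auto simp: rewrites_trivially_def)
qed

end

section \<open>The Schreier identity\<close>

context cyclic_free_product
begin

lemma sgen_closed [simp]: "j \<in> {1..k} \<Longrightarrow> sgen s j \<in> carrier G"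
  by (simp add: sgen_def conj_def comm_def)

lemma word_over_sgen_word [simp]: "j \<in> {1..k} \<Longrightarrow> word_over (carrier G) (sgen_word s j)"
  by (simp add: sgen_word_def)

lemma eval_sgen_word: "j \<in> {1..k} \<Longrightarrow> eval_word G (sgen_word s j) = sgen s j"
proof -
  assume j: "j \<in> {1..k}"
  show ?thesis
  proof (cases "is_sgen s j")
    case True
    then show ?thesis
      using j by (simp add: sgen_word_def eval_word_Cons)
  next
    case False
    then consider "digit s j = 0" | "\<forall>i\<in>{1..<j}. digit s i = 0"
      by (auto simp: is_sgen_def)
    then have "sgen s j = \<one>\<^bsub>G\<^esub>"
    proof cases
      case 1
      then have "e j [^]\<^bsub>G\<^esub> s j = e j [^]\<^bsub>G\<^esub> (0 :: int)"
        using j e_pow_cong[of j s 0] by (simp add: digit_def)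
      then show ?thesis
        using j by (simp add: sgen_def conj_def comm_def)
    next
      case 2
      then have "lower_part s j = lower_part 0 j"
        using j by (intro lower_part_cong) (auto simp: digit_def)
      also have "\<dots> = \<one>\<^bsub>G\<^esub>"
        unfolding lower_part_def by (intro G.dprod_eq_one) simp
      finally show ?thesis
        using j by (simp add: sgen_def conj_def comm_def)
    qed
    then show ?thesis
      using False by (simp add: sgen_word_def)
  qed
qed

lemma word_over_rewrite: "gen_word w \<Longrightarrow> word_over (carrier G) (rewrite s w)"
proof (induction w arbitrary: s)
  case (Cons x w)
  obtain y b where x: "x = (y, b)"
    by fastforce
  have "word_over (carrier G) (rewrite_letter s x)"
    using Cons.prems by (cases y) (auto simp: x sgen_word_def conj_def)
  then show ?case
    using Cons by simp
qed simp

lemma cls_letter_Inl: "j \<in> {1..k} \<Longrightarrow> cls [(Inl j, b)] = e j [^]\<^bsub>G\<^esub> (if b then - 1 else 1 :: int)"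
  using cls_word_inv[of "[(Inl j, False)]"]
  by (cases b) (simp_all add: e_eq_cls inv_letter_def G.int_pow_neg)

lemma cls_letter_Inr: "l \<in> {1..2*n} \<Longrightarrow> cls [(Inr l, b)] = (if b then inv\<^bsub>G\<^esub> h l else h l)"
  using cls_word_inv[of "[(Inr l, False)]"]
  by (cases b) (simp_all add: h_eq_cls inv_letter_def)

lemma transversal_mult_letter:
  assumes x: "fst x \<in> gens k n"
  shows "transversal s \<otimes>\<^bsub>G\<^esub> cls [x]
    = eval_word G (rewrite_letter s x) \<otimes>\<^bsub>G\<^esub> transversal (s + letter_exp x)"
proof -
  obtain y b where xyb: "x = (y, b)"
    by fastforce
  show ?thesis
  proof (cases y)
    case (Inl j)
    then have j: "j \<in> {1..k}"
      using x xyb by simp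
    define c :: int where "c = (if b then - 1 else 1)"
    have exp_x: "letter_exp x = (\<lambda>i. if i = j then c else 0)"
      unfolding c_def by (simp add: xyb Inl)
    have cls_x: "cls [x] = e j [^]\<^bsub>G\<^esub> c"
      using j unfolding c_def by (simp add: xyb Inl cls_letter_Inl)
    let ?s' = "s + letter_exp x"
    have same_outside: "digit ?s' i = digit s i" if "i \<noteq> j" for i
      using that by (simp add: exp_x digit_def)
    have parts: "upper_part ?s' j = upper_part s j" "lower_part ?s' j = lower_part s j"
      using j same_outside by (auto intro!: upper_part_cong lower_part_cong)
    have pow: "e j [^]\<^bsub>G\<^esub> ?s' j = e j [^]\<^bsub>G\<^esub> s j \<otimes>\<^bsub>G\<^esub> e j [^]\<^bsub>G\<^esub> c"
      using j by (simp add: exp_x G.int_pow_mult)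
    have "transversal s \<otimes>\<^bsub>G\<^esub> cls [x]
        = upper_part s j \<otimes>\<^bsub>G\<^esub> e j [^]\<^bsub>G\<^esub> s j \<otimes>\<^bsub>G\<^esub> lower_part s j \<otimes>\<^bsub>G\<^esub> e j [^]\<^bsub>G\<^esub> c"
      using j by (simp add: transversal_split cls_x)
    also have "\<dots> = sgen s j \<otimes>\<^bsub>G\<^esub> inv\<^bsub>G\<^esub> sgen ?s' j \<otimes>\<^bsub>G\<^esub> transversal ?s'"
      using j G.mult_eq_conj_comm_shift[of "upper_part s j" "e j [^]\<^bsub>G\<^esub> s j" "lower_part s j"
          "e j [^]\<^bsub>G\<^esub> c"]
      unfolding sgen_def transversal_split[OF j, of ?s'] parts pow by simp
    also have "\<dots> = eval_word G (rewrite_letter s x) \<otimes>\<^bsub>G\<^esub> transversal ?s'"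
      using j by (simp add: xyb Inl G.eval_word_append G.eval_word_word_inv eval_sgen_word)
    finally show ?thesis .
  next
    case (Inr l)
    then have l: "l \<in> {1..2*n}"
      using x xyb by simp
    show ?thesis
      using l by (cases b)
        (simp_all add: xyb Inr cls_letter_Inr eval_word_Cons conj_def G.m_assoc G.inv_mult_group)
  qed
qed

lemma transversal_mult_cls:
  "gen_word w \<Longrightarrow>
    transversal s \<otimes>\<^bsub>G\<^esub> cls w = eval_word G (rewrite s w) \<otimes>\<^bsub>G\<^esub> transversal (s + exp_sum w)"
proof (induction w arbitrary: s)
  case (Cons x w)
  have x: "fst x \<in> gens k n" and w: "gen_word w"
    using Cons.prems by simp_all
  have "transversal s \<otimes>\<^bsub>G\<^esub> cls (x # w) = (transversal s \<otimes>\<^bsub>G\<^esub> cls [x]) \<otimes>\<^bsub>G\<^esub> cls w"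
    using cls_append[of "[x]" w] x w by (simp add: G.m_assoc)
  also have "\<dots> = eval_word G (rewrite_letter s x)
      \<otimes>\<^bsub>G\<^esub> (transversal (s + letter_exp x) \<otimes>\<^bsub>G\<^esub> cls w)"
    using transversal_mult_letter[OF x] word_over_rewrite[of "[x]" s] x w
    by (simp add: G.m_assoc)
  also have "\<dots> = eval_word G (rewrite s (x # w)) \<otimes>\<^bsub>G\<^esub> transversal (s + exp_sum (x # w))"
    using Cons.IH[OF w] word_over_rewrite[of "[x]" s] word_over_rewrite[OF w] x
    by (simp add: G.eval_word_append G.m_assoc add.assoc plus_fun_def)
  finally show ?case .
qed simp

lemma cls_eq_eval_rewrite:
  "gen_word w \<Longrightarrow> cls w = eval_word G (reduce (rewrite 0 w)) \<otimes>\<^bsub>G\<^esub> transversal (exp_sum w)"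
  using transversal_mult_cls[of w 0] word_over_rewrite[of w 0] by (simp add: G.eval_word_reduce)

end

lemma pos_residue_eq_zero_iff: "u \<in> {1..M} \<Longrightarrow> int u mod int M = 0 \<longleftrightarrow> u = M"
  by (cases "u = M") (auto simp: zmod_int)

lemma pos_residue:
  assumes "0 < M"
  shows "nat ((a - 1) mod int M) + 1 \<in> {1..M}"
    and "int (nat ((a - 1) mod int M) + 1) mod int M = a mod int M"
proof -
  have range: "0 \<le> (a - 1) mod int M" "(a - 1) mod int M < int M"
    using assms by simp_all
  then show "nat ((a - 1) mod int M) + 1 \<in> {1..M}"
    by auto
  have "int (nat ((a - 1) mod int M) + 1) = (a - 1) mod int M + 1"
    using range by simp
  also have "\<dots> mod int M = a mod int M"
    by (metis mod_add_left_eq diff_add_cancel)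
  finally show "int (nat ((a - 1) mod int M) + 1) mod int M = a mod int M" .
qed

context cyclic_free_product
begin

lemma exists_pos_exponents:
  obtains u :: "nat \<Rightarrow> nat"
  where "\<And>i. i \<in> {1..k} \<Longrightarrow> u i \<in> {1..m i}"
    and "\<And>i. i \<in> {1..k} \<Longrightarrow> digit (\<lambda>i. int (u i)) i = digit s i"
  by (rule that[of "\<lambda>i. nat ((s i - 1) mod int (m i)) + 1"])
     (simp_all only: pos_residue orders_pos digit_def)

lemma e_pow_pos_exponent:
  "i \<in> {1..k} \<Longrightarrow> digit (\<lambda>i. int (u i)) i = digit s i \<Longrightarrow> e i [^]\<^bsub>G\<^esub> u i = e i [^]\<^bsub>G\<^esub> s i"
  using e_pow_cong[of i "\<lambda>i. int (u i)" s] by (simp add: int_pow_int)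

lemma sgen_in_S1:
  assumes j: "j \<in> {1..k}" and sg: "is_sgen s j"
  shows "sgen s j \<in> S1 k n m"
proof -
  obtain u where u: "\<And>i. i \<in> {1..k} \<Longrightarrow> u i \<in> {1..m i}"
    "\<And>i. i \<in> {1..k} \<Longrightarrow> digit (\<lambda>i. int (u i)) i = digit s i"
    using exists_pos_exponents[of s] by blast
  let ?u = "u(j := nat (digit s j))"
  have digit_j: "0 < digit s j" "digit s j < int (m j)"
    using sg orders_pos[OF j] by (auto simp: is_sgen_def digit_def order_le_neq_trans)
  have "digit (\<lambda>i. int (?u i)) i = digit s i" if "i \<in> {1..k}" for i
    using u(2)[OF that] digit_j by (simp add: digit_def)
  then have pows: "e i [^]\<^bsub>G\<^esub> ?u i = e i [^]\<^bsub>G\<^esub> s i" if "i \<in> {1..k}" for i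
    using that by (intro e_pow_pos_exponent) simp_all
  have dprod_eq:
    "dprod G (\<lambda>i. e i [^]\<^bsub>G\<^esub> ?u i) lo hi = dprod G (\<lambda>i. e i [^]\<^bsub>G\<^esub> s i) lo hi"
    if "1 \<le> lo" "hi \<le> k" for lo hi
    using that by (intro G.dprod_cong pows) auto
  have "dprod G (\<lambda>i. e i [^]\<^bsub>G\<^esub> ?u i) (Suc j) k = upper_part s j"
    unfolding upper_part_def by (rule dprod_eq) simp_all
  moreover have "dprod G (\<lambda>i. e i [^]\<^bsub>G\<^esub> ?u i) 1 (j - 1) = lower_part s j"
    unfolding lower_part_def by (rule dprod_eq) (use j in auto)
  ultimately have "sgen s j = conj G (dprod G (\<lambda>i. e i [^]\<^bsub>G\<^esub> ?u i) (Suc j) k)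
      (comm G (e j [^]\<^bsub>G\<^esub> ?u j) (dprod G (\<lambda>i. e i [^]\<^bsub>G\<^esub> ?u i) 1 (j - 1)))"
    using pows[OF j] by (simp add: sgen_def)
  moreover have "\<exists>i\<in>{1..<j}. ?u i \<noteq> m i"
  proof -
    obtain i where i: "i \<in> {1..<j}" "digit s i \<noteq> 0"
      using sg by (auto simp: is_sgen_def)
    then have "i \<in> {1..k}"
      using j by auto
    then have "u i \<noteq> m i"
      using i(2) u pos_residue_eq_zero_iff by (force simp: digit_def)
    then show ?thesis
      using i(1) by (intro bexI[of _ i]) auto
  qed
  ultimately show ?thesis
    unfolding S1_def Let_def using j u(1) digit_j
    by (intro CollectI exI[of _ j] exI[of _ ?u]) auto
qed

lemma S1_eq: "S1 k n m = {sgen s j | s j. j \<in> {1..k} \<and> is_sgen s j}"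
proof (intro equalityI subsetI)
  fix b
  assume "b \<in> S1 k n m"
  then obtain t u where t: "2 \<le> t" "t \<le> k"
    and u_below: "\<forall>i\<in>{1..<t}. u i \<in> {1..m i}" and u_nontriv: "\<exists>i\<in>{1..<t}. u i \<noteq> m i"
    and u_t: "u t \<in> {1..m t - 1}"
    and b: "b = conj G (dprod G (\<lambda>i. e i [^]\<^bsub>G\<^esub> u i) (Suc t) k)
             (comm G (e t [^]\<^bsub>G\<^esub> u t) (dprod G (\<lambda>i. e i [^]\<^bsub>G\<^esub> u i) 1 (t - 1)))"
    unfolding S1_def Let_def by blast
  let ?s = "\<lambda>i. int (u i)"
  have b_eq: "b = sgen ?s t"
    by (simp add: b sgen_def upper_part_def lower_part_def int_pow_int)
  have "digit ?s t \<noteq> 0"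
  proof -
    have "u t \<in> {1..m t}" "u t \<noteq> m t"
      using u_t by auto
    then show ?thesis
      using pos_residue_eq_zero_iff[of "u t" "m t"] by (simp add: digit_def)
  qed
  moreover have "\<exists>i\<in>{1..<t}. digit ?s i \<noteq> 0"
    using pos_residue_eq_zero_iff u_below u_nontriv by (auto simp: digit_def)
  ultimately have "is_sgen ?s t"
    by (simp add: is_sgen_def)
  then show "b \<in> {sgen s j | s j. j \<in> {1..k} \<and> is_sgen s j}"
    using t b_eq by (intro CollectI exI[of _ ?s] exI[of _ t]) auto
next
  fix b
  assume "b \<in> {sgen s j | s j. j \<in> {1..k} \<and> is_sgen s j}"
  then show "b \<in> S1 k n m"
    using sgen_in_S1 by blast
qed

lemma S2_eq: "S2 k n m = {conj G (transversal s) (h l) | s l. l \<in> {1..2*n}}"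
proof (intro equalityI subsetI)
  fix b
  assume "b \<in> S2 k n m"
  then obtain l u where "l \<in> {1..2*n}"
    and "b = conj G (dprod G (\<lambda>j. e j [^]\<^bsub>G\<^esub> (u j :: nat)) 1 k) (h l)"
    unfolding S2_def Let_def by blast
  then show "b \<in> {conj G (transversal s) (h l) | s l. l \<in> {1..2*n}}"
    by (intro CollectI exI[of _ "\<lambda>i. int (u i)"] exI[of _ l])
       (simp add: transversal_def int_pow_int)
next
  fix b
  assume "b \<in> {conj G (transversal s) (h l) | s l. l \<in> {1..2*n}}"
  then obtain s l where l: "l \<in> {1..2*n}" and b: "b = conj G (transversal s) (h l)"
    by blast
  obtain u where u: "\<And>i. i \<in> {1..k} \<Longrightarrow> u i \<in> {1..m i}"
    "\<And>i. i \<in> {1..k} \<Longrightarrow> digit (\<lambda>i. int (u i)) i = digit s i"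
    using exists_pos_exponents[of s] by blast
  have "transversal s = dprod G (\<lambda>j. e j [^]\<^bsub>G\<^esub> u j) 1 k"
    unfolding transversal_def using u(2) e_pow_pos_exponent by (intro G.dprod_cong) simp
  then show "b \<in> S2 k n m"
    unfolding S2_def Let_def using l u(1) b by (intro CollectI exI[of _ l] exI[of _ u]) auto
qed

end

context cyclic_free_product
begin

abbreviation S :: "(nat + nat) word set set" where
  "S \<equiv> S1 k n m \<union> S2 k n m"

lemma S_subset_carrier: "S \<subseteq> carrier G"
  by (auto simp: S1_eq S2_eq conj_def)

lemma carrier_subgroup_S: "carrier (subgroup_generated G S) = generate G S"
  using S_subset_carrier by (simp add: carrier_subgroup_generated Int_absorb1)

lemma word_over_S_rewrite: "gen_word w \<Longrightarrow> word_over S (rewrite s w)"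
proof (induction w arbitrary: s)
  case (Cons x w)
  obtain y b where x: "x = (y, b)"
    by fastforce
  have sgen_word_in_S: "word_over S (sgen_word s' j)" if "j \<in> {1..k}" for s' j
    using that by (auto simp: sgen_word_def S1_eq)
  have "word_over S (rewrite_letter s x)"
    using Cons.prems sgen_word_in_S by (cases y) (auto simp: x S2_eq)
  then show ?case
    using Cons by (simp add: plus_fun_def)
qed simp

fun pow_word :: "(nat \<Rightarrow> nat) \<Rightarrow> nat \<Rightarrow> (nat + nat) word" where
  "pow_word u 0 = []"
| "pow_word u (Suc i) = replicate (u (Suc i)) (Inl (Suc i), False) @ pow_word u i"

lemma gen_word_pow_word: "hi \<le> k \<Longrightarrow> gen_word (pow_word u hi)"
  by (induction hi) auto

lemma exp_sum_pow_word: "exp_sum (pow_word u hi) i = (if i \<in> {1..hi} then int (u i) else 0)"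
  by (induction hi) (auto simp: exp_sum_replicate_Inl)

lemma sgen_word_Nil: "(\<And>i. i \<in> {1..<j} \<Longrightarrow> digit s i = 0) \<Longrightarrow> sgen_word s j = []"
  by (auto simp: sgen_word_def is_sgen_def)

lemma rewrite_pow_word:
  "(\<And>i. i \<in> {1..<hi} \<Longrightarrow> digit s i = 0) \<Longrightarrow> reduce (rewrite s (pow_word u hi)) = []"
proof (induction hi arbitrary: s)
  case (Suc hi)
  let ?r = "replicate (u (Suc hi)) (Inl (Suc hi), False)"
  have same_below: "digit (s + exp_sum ?r) i = digit s i" if "i \<in> {1..<Suc hi}" for i
    using that by (simp add: exp_sum_replicate_Inl digit_def)
  have "reduce (rewrite s ?r) = reduce (sgen_word s (Suc hi) @ word_inv (sgen_word (s + exp_sum ?r) (Suc hi)))"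
    by (rule rewrite_power) simp
  also have "\<dots> = []"
  proof -
    have "sgen_word s (Suc hi) = []" "sgen_word (s + exp_sum ?r) (Suc hi) = []"
      using Suc.prems same_below by (auto intro!: sgen_word_Nil)
    then show ?thesis
      by simp
  qed
  finally have "reduce (rewrite s ?r) = []" .
  moreover have "reduce (rewrite (s + exp_sum ?r) (pow_word u hi)) = []"
    using Suc.prems same_below by (intro Suc.IH) (simp add: digit_def)
  ultimately show ?case
    using reduce_append[of "rewrite s ?r" "rewrite (s + exp_sum ?r) (pow_word u hi)"]
    by (simp add: rewrite_append)
qed simp

lemma exists_transversal_word: "\<exists>w. gen_word w \<and> exp_sum w \<approx> s \<and> reduce (rewrite 0 w) = []"
proof (intro exI conjI)
  let ?w = "pow_word (\<lambda>i. nat (digit s i)) k"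
  show "gen_word ?w"
    by (simp add: gen_word_pow_word)
  show "exp_sum ?w \<approx> s"
    using orders_pos by (simp add: same_digits_def exp_sum_pow_word digit_def)
  show "reduce (rewrite 0 ?w) = []"
    by (rule rewrite_pow_word) (simp add: digit_def)
qed

lemma rewrite_word_inv_transversal_word:
  assumes "gen_word a" "reduce (rewrite 0 a) = []" "s \<approx> exp_sum a"
  shows "reduce (rewrite s (word_inv a)) = []"
proof -
  have "rewrite s (word_inv a) = rewrite (0 + exp_sum a) (word_inv a)"
    using rewrite_cong[of "word_inv a" s "exp_sum a"] assms(1,3) by simp
  then show ?thesis
    using rewrite_word_inv[of 0 a] assms(2) by (simp add: reduce_word_inv)
qed

lemma cls_transversal_word:
  "gen_word w \<Longrightarrow> reduce (rewrite 0 w) = [] \<Longrightarrow> cls w = transversal (exp_sum w)"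
  using cls_eq_eval_rewrite by simp

end

section \<open>Freeness and index\<close>

context cyclic_free_product
begin

lemma rewrite_to_sgen:
  assumes j: "j \<in> {1..k}" and sg: "is_sgen s j"
  shows "\<exists>w. gen_word w \<and> exp_sum w \<approx> 0 \<and> reduce (rewrite 0 w) = [(sgen s j, False)]"
proof -
  let ?s' = "s(j := 0)"
  obtain a where a: "gen_word a" "exp_sum a \<approx> s" "reduce (rewrite 0 a) = []"
    using exists_transversal_word by blast
  obtain a' where a': "gen_word a'" "exp_sum a' \<approx> ?s'" "reduce (rewrite 0 a') = []"
    using exists_transversal_word by blast
  let ?r = "replicate (nat (digit s j)) (Inl j, True)"
  have "s + exp_sum ?r \<approx> ?s'"
    using orders_pos[OF j]
    by (auto simp: same_digits_def digit_def exp_sum_replicate_Inl minus_mod_eq_mult_div)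
  then have after_r: "exp_sum a + exp_sum ?r \<approx> ?s'"
    using same_digits_add[OF a(2) same_digits_refl] same_digits_trans by blast
  have "sgen_word (exp_sum a) j = [(sgen s j, False)]"
    using sgen_word_cong[OF j a(2)] sg by (simp add: sgen_word_def)
  moreover have "sgen_word (exp_sum a + exp_sum ?r) j = []"
    using sgen_word_cong[OF j after_r] by (simp add: sgen_word_def is_sgen_def digit_def)
  ultimately have middle: "reduce (rewrite (exp_sum a) ?r) = [(sgen s j, False)]"
    using rewrite_power[of j ?r "exp_sum a"] by simp
  have last: "reduce (rewrite (exp_sum a + exp_sum ?r) (word_inv a')) = []"
    using a'(1,3) same_digits_trans[OF after_r same_digits_sym[OF a'(2)]]
    by (rule rewrite_word_inv_transversal_word)
  let ?w = "a @ ?r @ word_inv a'"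
  have "reduce (rewrite 0 ?w) = reduce (reduce (rewrite 0 a) @ reduce (rewrite (exp_sum a) ?r)
      @ reduce (rewrite (exp_sum a + exp_sum ?r) (word_inv a')))"
    by (simp add: rewrite_append)
  also have "\<dots> = [(sgen s j, False)]"
    using a(3) middle last by simp
  finally have "reduce (rewrite 0 ?w) = [(sgen s j, False)]" .
  moreover have "exp_sum ?w \<approx> 0"
  proof -
    have "exp_sum ?w = (exp_sum a + exp_sum ?r) + - exp_sum a'"
      by (simp add: add.assoc)
    moreover have "(exp_sum a + exp_sum ?r) + - exp_sum a' \<approx> ?s' + - ?s'"
      using same_digits_add[OF after_r same_digits_uminus[OF a'(2)]] .
    ultimately show ?thesis
      by (simp add: add_diff_eq)
  qed
  moreover have "gen_word ?w"
    using a(1) a'(1) j by simp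
  ultimately show ?thesis
    by blast
qed

lemma rewrite_to_conj_h:
  assumes l: "l \<in> {1..2*n}"
  shows "\<exists>w. gen_word w \<and> exp_sum w \<approx> 0
    \<and> reduce (rewrite 0 w) = [(conj G (transversal s) (h l), False)]"
proof -
  obtain a where a: "gen_word a" "exp_sum a \<approx> s" "reduce (rewrite 0 a) = []"
    using exists_transversal_word by blast
  let ?w = "a @ [(Inr l, False)] @ word_inv a"
  have "reduce (rewrite 0 ?w)
      = reduce (reduce (rewrite 0 a) @ [(conj G (transversal (exp_sum a)) (h l), False)]
        @ reduce (rewrite (0 + exp_sum a) (word_inv a)))"
    by (simp add: rewrite_append)
  also have "\<dots> = [(conj G (transversal s) (h l), False)]"
    using a rewrite_word_inv[of 0 a] transversal_cong by (simp add: reduce_word_inv reduce_Cons)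
  finally show ?thesis
    using a(1) l by (intro exI[of _ ?w]) simp
qed

lemma rewrite_to_S_letter:
  "b \<in> S \<Longrightarrow> \<exists>w. gen_word w \<and> exp_sum w \<approx> 0 \<and> reduce (rewrite 0 w) = [(b, False)]"
  using rewrite_to_sgen rewrite_to_conj_h by (auto simp: S1_eq S2_eq)

lemma cls_eq_if_rewrite_letter:
  assumes "gen_word w" "exp_sum w \<approx> 0" "reduce (rewrite 0 w) = [(b, False)]" "b \<in> carrier G"
  shows "cls w = b"
  using cls_eq_eval_rewrite[OF assms(1)] transversal_cong[OF assms(2)] assms(3,4)
  by (simp add: eval_word_Cons)

definition schreier_coords :: "(nat + nat) word set \<Rightarrow> (nat + nat) word set word" where
  "schreier_coords c = reduce (rewrite 0 (SOME w. gen_word w \<and> cls w = c))"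

lemma schreier_coords_cls: "gen_word w \<Longrightarrow> schreier_coords (cls w) = reduce (rewrite 0 w)"
  unfolding schreier_coords_def by (rule someI2[of _ w]) (auto intro: rewrite_cls_eq)

lemma cls_of_subgroup:
  "c \<in> generate G S \<Longrightarrow> \<exists>w. gen_word w \<and> exp_sum w \<approx> 0 \<and> c = cls w"
proof (induction c rule: generate.induct)
  case one
  then show ?case
    by (intro exI[of _ "[]"]) simp
next
  case (incl b)
  then obtain w where w: "gen_word w" "exp_sum w \<approx> 0" "reduce (rewrite 0 w) = [(b, False)]"
    using rewrite_to_S_letter by blast
  have "cls w = b"
    using cls_eq_if_rewrite_letter[OF w] S_subset_carrier incl by blast
  with w show ?case
    by blast
next
  case (inv b)
  then obtain w where w: "gen_word w" "exp_sum w \<approx> 0" "reduce (rewrite 0 w) = [(b, False)]"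
    using rewrite_to_S_letter by blast
  have "b = cls w"
    using cls_eq_if_rewrite_letter[OF w] S_subset_carrier inv by blast
  then have "gen_word (word_inv w) \<and> exp_sum (word_inv w) \<approx> 0 \<and> inv\<^bsub>G\<^esub> b = cls (word_inv w)"
    using w(1) same_digits_uminus[OF w(2)] cls_word_inv[OF w(1)] by simp
  then show ?case
    by blast
next
  case (eng c d)
  then obtain v w where v: "gen_word v" "exp_sum v \<approx> 0" "c = cls v"
    and w: "gen_word w" "exp_sum w \<approx> 0" "d = cls w"
    by blast
  then have "gen_word (v @ w) \<and> exp_sum (v @ w) \<approx> 0 \<and> c \<otimes>\<^bsub>G\<^esub> d = cls (v @ w)"
    using same_digits_add[OF v(2) w(2)] cls_append by simp
  then show ?case
    by blast
qed

lemma schreier_coords_hom: "schreier_coords \<in> hom (subgroup_generated G S) (free_grp S)"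
proof (rule homI)
  fix c d
  assume "c \<in> carrier (subgroup_generated G S)" "d \<in> carrier (subgroup_generated G S)"
  then obtain v w where v: "gen_word v" "exp_sum v \<approx> 0" "c = cls v"
    and w: "gen_word w" "exp_sum w \<approx> 0" "d = cls w"
    unfolding carrier_subgroup_S using cls_of_subgroup by meson
  show "schreier_coords c \<in> carrier (free_grp S)"
    using v word_over_S_rewrite[OF v(1)]
    by (simp add: schreier_coords_cls carrier_free_grp word_over_reduce)
  have "rewrite (exp_sum v) w = rewrite 0 w"
    using rewrite_cong[OF w(1) v(2)] .
  then show "schreier_coords (c \<otimes>\<^bsub>subgroup_generated G S\<^esub> d)
      = schreier_coords c \<otimes>\<^bsub>free_grp S\<^esub> schreier_coords d"
    using v w by (simp add: cls_append[symmetric] schreier_coords_cls rewrite_append mult_free_grp)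
qed

theorem schreier_coords_iso: "schreier_coords \<in> iso (subgroup_generated G S) (free_grp S)"
proof (rule G.iso_free_grp_if_letters[OF S_subset_carrier schreier_coords_hom])
  fix b
  assume "b \<in> S"
  then obtain w where w: "gen_word w" "exp_sum w \<approx> 0" "reduce (rewrite 0 w) = [(b, False)]"
    using rewrite_to_S_letter by blast
  moreover have "cls w = b"
    using cls_eq_if_rewrite_letter[OF w] S_subset_carrier \<open>b \<in> S\<close> by blast
  ultimately show "schreier_coords b = [(b, False)]"
    using schreier_coords_cls by metis
qed

abbreviation residues :: "(nat \<Rightarrow> int) set" where
  "residues \<equiv> PiE {1..k} (\<lambda>i. {0..<int (m i)})"

lemma residues_eq_if_same_digits:
  assumes v: "v \<in> residues" and v': "v' \<in> residues" and diff: "v + - v' \<approx> 0"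
  shows "v = v'"
proof (rule PiE_ext[OF v v'])
  fix i
  assume i: "i \<in> {1..k}"
  have "(v i - v' i) mod int (m i) = 0"
    using diff i by (simp add: same_digits_def digit_def)
  then have "v i mod int (m i) = v' i mod int (m i)"
    by (simp add: mod_eq_dvd_iff mod_eq_0_iff_dvd)
  moreover have "v i \<in> {0..<int (m i)}" "v' i \<in> {0..<int (m i)}"
    using v v' i by auto
  ultimately show "v i = v' i"
    by simp
qed

lemma transversal_covers:
  assumes g: "g \<in> carrier G"
  shows "\<exists>v\<in>residues. g \<otimes>\<^bsub>G\<^esub> inv\<^bsub>G\<^esub> transversal v \<in> carrier (subgroup_generated G S)"
proof -
  obtain w where w: "gen_word w" "g = cls w"
    using cls_surj[OF g] by blast
  let ?v = "restrict (digit (exp_sum w)) {1..k}"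
  have "?v \<in> residues"
    using orders_pos by (auto simp: digit_def)
  moreover have "transversal ?v = transversal (exp_sum w)"
    by (rule transversal_cong) (simp add: same_digits_def digit_def)
  then have "g \<otimes>\<^bsub>G\<^esub> inv\<^bsub>G\<^esub> transversal ?v = eval_word G (reduce (rewrite 0 w))"
    using cls_eq_eval_rewrite[OF w(1)] w(2) word_over_rewrite[OF w(1), of 0]
    by (simp add: G.m_assoc word_over_reduce)
  moreover have "eval_word G (reduce (rewrite 0 w)) \<in> carrier (subgroup_generated G S)"
    unfolding carrier_subgroup_S using S_subset_carrier word_over_S_rewrite[OF w(1)]
    by (intro G.eval_word_in_generate word_over_reduce)
  ultimately show ?thesis
    by (intro bexI[of _ ?v]) simp_all
qed

lemma transversal_separates:
  assumes v: "v \<in> residues" and v': "v' \<in> residues"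
    and "transversal v \<otimes>\<^bsub>G\<^esub> inv\<^bsub>G\<^esub> transversal v' \<in> carrier (subgroup_generated G S)"
  shows "v = v'"
proof -
  obtain w where w: "gen_word w" "exp_sum w \<approx> 0"
    "cls w = transversal v \<otimes>\<^bsub>G\<^esub> inv\<^bsub>G\<^esub> transversal v'"
    using assms(3) cls_of_subgroup carrier_subgroup_S by blast
  obtain a where a: "gen_word a" "exp_sum a \<approx> v" "reduce (rewrite 0 a) = []"
    using exists_transversal_word by blast
  obtain a' where a': "gen_word a'" "exp_sum a' \<approx> v'" "reduce (rewrite 0 a') = []"
    using exists_transversal_word by blast
  have "cls (a @ word_inv a') = cls w"
    using a a' w(3) cls_transversal_word transversal_cong by (simp add: cls_append cls_word_inv)
  moreover have "gen_word (a @ word_inv a')"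
    using a(1) a'(1) by simp
  ultimately have "exp_sum (a @ word_inv a') \<approx> 0"
    using exp_sum_cls_eq[OF w(1)] w(2) same_digits_trans by blast
  moreover have "exp_sum (a @ word_inv a') \<approx> v + - v'"
    using same_digits_add[OF a(2) same_digits_uminus[OF a'(2)]] by simp
  ultimately show ?thesis
    using residues_eq_if_same_digits[OF v v'] same_digits_trans same_digits_sym by blast
qed

theorem card_rcosets: "card (rcosets\<^bsub>G\<^esub> carrier (subgroup_generated G S)) = (\<Prod>i=1..k. m i)"
proof -
  have "card (rcosets\<^bsub>G\<^esub> carrier (subgroup_generated G S)) = card residues"
    using G.subgroup_subgroup_generated transversal_covers transversal_separates
    by (intro G.card_rcosets_eq_card_transversal[where t = transversal]) auto
  then show ?thesis
    by (simp add: card_PiE)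
qed

end

theorem corollary3p16:
  fixes n k :: nat and m :: "nat \<Rightarrow> nat"
  assumes "k \<ge> 1"
    and "\<forall>i\<in>{1..k}. m i \<ge> 2"
    and "\<not> cyclic_group (pres_grp k n m)"
    and "\<not> (pres_grp k n m \<cong> pres_grp 2 0 (\<lambda>_. 2))"
  shows "is_free_grp (subgroup_generated (pres_grp k n m) (S1 k n m \<union> S2 k n m))
    \<and> card (rcosets\<^bsub>pres_grp k n m\<^esub> (carrier (subgroup_generated (pres_grp k n m) (S1 k n m \<union> S2 k n m))))
        = (\<Prod>i=1..k. m i)"
proof -
  interpret cyclic_free_product k n m
    using assms(2) by unfold_locales fastforce
  show ?thesis
    using schreier_coords_iso card_rcosets by (auto simp: is_free_grp_def intro: is_isoI)
qed

end
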